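(* Let $p,q\ge1$ be relatively prime integers, $p=p_1^2+p_2^2+p_3^2+p_4^2$ with integers $p_j\ge 0$, and let $a,b,\gamma$ be integers such that $\Delta=r_1r_4-r_2r_3$ is relatively prime to $q$, where $r_1=-p_1-2\gamma p_3+bp_4$, $r_2=p_2+2ap_4-bp_3$, $r_3=p_3-2\gamma p_1+bp_2$, $r_4=-p_4+2ap_2-bp_1$. Let $\varphi(n,m)=e\big(\tfrac1q(an^2+bnm+\gamma m^2)\big)$. For integers $k,\ell$ set $M=p_2k+p_4\ell$, $N=-p_1k-p_3\ell$, $M'=-p_4k+p_2\ell$, $N'=p_3k-p_1\ell$, and $$S(k,\ell)=\sum_{n,m=0}^{q-1} e\Big(\tfrac{nM'+mN'}{q}\Big)\,\overline{\varphi(n,m)}\,\varphi(n+M,m+N).$$ Then $S(k,\ell)=q^2$ if $q\mid k$ and $q\mid \ell$, and $S(k,\ell)=0$ otherwise.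
   Context: $e(t):=e^{2\pi i t}$. *)

theory Defs
  imports "HOL-Analysis.Analysis"
begin

definition e :: "real \<Rightarrow> complex" where
  "e t = exp (2 * of_real pi * \<i> * of_real t)"

end

theory Submission
  imports Defs
begin

text \<open>Write \<open>Q(n,m) = a n\<^sup>2 + b n m + \<gamma> m\<^sup>2\<close>. Expanding \<open>Q(n+M, m+N) - Q(n,m)\<close>, the summand
  equals \<open>e((Q(M,N) + nA + mB)/q)\<close> with \<open>A = r\<^sub>4 k + r\<^sub>2 l\<close> and \<open>B = r\<^sub>3 k + r\<^sub>1 l\<close>, so the double
  sum factors into two complete geometric sums of \<open>q\<close>-th roots of unity. It vanishes unless
  \<open>q\<close> divides both \<open>A\<close> and \<open>B\<close>, and since the matrix taking \<open>(k,l)\<close> to \<open>(A,B)\<close> has determinant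
  \<open>\<Delta>\<close>, coprime to \<open>q\<close>, this happens exactly when \<open>q\<close> divides \<open>k\<close> and \<open>l\<close>; then \<open>q\<close> also
  divides \<open>Q(M,N)\<close>.\<close>

lemma e_add: "e (x + y) = e x * e y"
  unfolding e_def by (simp add: exp_add[symmetric] algebra_simps)

lemma e_of_nat_mult: "e (of_nat n * x) = e x ^ n"
  unfolding e_def by (simp add: exp_of_nat_mult[symmetric] algebra_simps)

lemma e_of_int: "e (of_int n) = 1"
  unfolding e_def by (simp add: exp_eq_1)

lemma cnj_e: "cnj (e x) = e (- x)"
  unfolding e_def by (simp add: exp_cnj)

lemma e_eq_1_iff: "e x = 1 \<longleftrightarrow> x \<in> \<int>"
proof -
  have "e x = 1 \<longleftrightarrow> (\<exists>n::int. 2 * pi * x = of_int (2 * n) * pi)"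
    unfolding e_def by (simp add: exp_eq_1)
  also have "\<dots> \<longleftrightarrow> x \<in> \<int>"
    by (auto elim!: Ints_cases simp: mult.commute)
  finally show ?thesis .
qed

lemma of_int_divide_in_Ints_iff:
  assumes "q \<noteq> 0"
  shows "real_of_int A / of_int q \<in> \<int> \<longleftrightarrow> q dvd A"
proof
  assume "real_of_int A / of_int q \<in> \<int>"
  then obtain j where "real_of_int A / of_int q = of_int j"
    by (auto elim: Ints_cases)
  then have "A = q * j"
    using assms by (simp add: field_simps flip: of_int_mult)
  then show "q dvd A" by simp
qed (use assms in auto)

lemma e_of_int_divide_eq_1_iff:
  "q \<noteq> 0 \<Longrightarrow> e (of_int A / of_int q) = 1 \<longleftrightarrow> q dvd A"
  by (simp add: e_eq_1_iff of_int_divide_in_Ints_iff)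

lemma sum_e_linear:
  fixes q A :: int
  assumes "q \<ge> 1"
  shows "(\<Sum>n\<in>{0..q-1}. e (of_int (n * A) / of_int q)) = (if q dvd A then of_int q else 0)"
proof -
  define z where "z = e (of_int A / of_int q)"
  have "{0..q-1} = int ` {..<nat q}"
    using assms by (auto simp: image_iff intro!: bexI[of _ "nat x" for x])
  then have "(\<Sum>n\<in>{0..q-1}. e (of_int (n * A) / of_int q)) = (\<Sum>i<nat q. z ^ i)"
    by (simp add: sum.reindex z_def flip: e_of_nat_mult)
  moreover have "z ^ nat q = 1"
    using assms by (simp add: z_def e_of_int flip: e_of_nat_mult)
  moreover have "z = 1 \<longleftrightarrow> q dvd A"
    using assms by (simp add: z_def e_of_int_divide_eq_1_iff)
  ultimately show ?thesis
    using assms by (simp add: sum_gp_strict)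
qed

lemma sum2_e_affine:
  fixes q A B C :: int
  assumes "q \<ge> 1"
  shows "(\<Sum>n\<in>{0..q-1}. \<Sum>m\<in>{0..q-1}. e (of_int (C + n * A + m * B) / of_int q))
       = (if q dvd A \<and> q dvd B then e (of_int C / of_int q) * of_int (q^2) else 0)"
proof -
  have phase_split: "e (of_int (C + n * A + m * B) / of_int q)
      = e (of_int C / of_int q) * (e (of_int (n * A) / of_int q) * e (of_int (m * B) / of_int q))"
    for n m
    by (simp add: add_divide_distrib add.assoc flip: e_add)
  have "(\<Sum>n\<in>{0..q-1}. \<Sum>m\<in>{0..q-1}. e (of_int (C + n * A + m * B) / of_int q))
      = e (of_int C / of_int q) * ((\<Sum>n\<in>{0..q-1}. e (of_int (n * A) / of_int q))
                                  * (\<Sum>m\<in>{0..q-1}. e (of_int (m * B) / of_int q)))"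
    unfolding phase_split sum_distrib_left[symmetric] sum_product by simp
  then show ?thesis
    unfolding sum_e_linear[OF assms] by (simp add: power2_eq_square)
qed

lemma quadratic_form_shift:
  fixes a b c n m M N :: "'a :: comm_ring_1"
  shows "a * (n + M)^2 + b * (n + M) * (m + N) + c * (m + N)^2
       = (a * n^2 + b * n * m + c * m^2) + (a * M^2 + b * M * N + c * N^2)
         + n * (2 * a * M + b * N) + m * (b * M + 2 * c * N)"
  by (simp add: power2_eq_square algebra_simps)

lemma dvd_linear_images_iff_coprime_det:
  fixes q k l r1 r2 r3 r4 :: "'a :: ring_gcd"
  assumes "coprime (r1 * r4 - r2 * r3) q"
  shows "q dvd k * r4 + l * r2 \<and> q dvd k * r3 + l * r1 \<longleftrightarrow> q dvd k \<and> q dvd l"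
proof
  assume images: "q dvd k * r4 + l * r2 \<and> q dvd k * r3 + l * r1"
  have "r1 * (k * r4 + l * r2) - r2 * (k * r3 + l * r1) = (r1 * r4 - r2 * r3) * k"
       "r4 * (k * r3 + l * r1) - r3 * (k * r4 + l * r2) = (r1 * r4 - r2 * r3) * l"
    by (simp_all add: algebra_simps)
  then have "q dvd (r1 * r4 - r2 * r3) * k" "q dvd (r1 * r4 - r2 * r3) * l"
    using images by (metis dvd_diff dvd_mult)+
  then show "q dvd k \<and> q dvd l"
    using assms by (simp add: coprime_commute coprime_dvd_mult_right_iff)
qed auto

theorem mainTheorem6:
  fixes p q p1 p2 p3 p4 a b \<gamma> k l :: int
    and \<phi> :: "int \<Rightarrow> int \<Rightarrow> complex"
  assumes "p \<ge> 1" and "q \<ge> 1" and "coprime p q"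
    and "p = p1^2 + p2^2 + p3^2 + p4^2"
    and "p1 \<ge> 0" and "p2 \<ge> 0" and "p3 \<ge> 0" and "p4 \<ge> 0"
    and "coprime ((- p1 - 2*\<gamma>*p3 + b*p4) * (- p4 + 2*a*p2 - b*p1)
                  - (p2 + 2*a*p4 - b*p3) * (p3 - 2*\<gamma>*p1 + b*p2)) q"
    and "\<phi> = (\<lambda>n m. e ((a*n^2 + b*n*m + \<gamma>*m^2) / q))"
  shows "(\<Sum>n\<in>{0..q-1}. \<Sum>m\<in>{0..q-1}.
            e (((n * (- p4*k + p2*l)) + m * (p3*k - p1*l)) / q)
            * cnj (\<phi> n m) * \<phi> (n + (p2*k + p4*l)) (m + (- p1*k - p3*l)))
         = (if q dvd k \<and> q dvd l then of_int (q^2) else 0)"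
proof -
  define M N where "M = p2*k + p4*l" and "N = - p1*k - p3*l"
  define r1 r2 r3 r4 where "r1 = - p1 - 2*\<gamma>*p3 + b*p4" and "r2 = p2 + 2*a*p4 - b*p3"
    and "r3 = p3 - 2*\<gamma>*p1 + b*p2" and "r4 = - p4 + 2*a*p2 - b*p1"
  define A B C where "A = k*r4 + l*r2" and "B = k*r3 + l*r1" and "C = a*M^2 + b*M*N + \<gamma>*N^2"
  have phase: "(n * (- p4*k + p2*l) + m * (p3*k - p1*l)) - (a*n^2 + b*n*m + \<gamma>*m^2)
      + (a*(n + M)^2 + b*(n + M)*(m + N) + \<gamma>*(m + N)^2) = C + n*A + m*B" for n m
    unfolding quadratic_form_shift
    by (simp add: M_def N_def r1_def r2_def r3_def r4_def A_def B_def C_def algebra_simps)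
  have summand: "e (((n * (- p4*k + p2*l)) + m * (p3*k - p1*l)) / q)
      * cnj (\<phi> n m) * \<phi> (n + M) (m + N) = e (of_int (C + n*A + m*B) / of_int q)" for n m
    unfolding assms(10) cnj_e e_add[symmetric] phase[of n m, symmetric]
    by (rule arg_cong[where f = e]) (use assms(2) in \<open>simp add: field_simps\<close>)
  have "q dvd A \<and> q dvd B \<longleftrightarrow> q dvd k \<and> q dvd l"
    using dvd_linear_images_iff_coprime_det assms(9)
    unfolding A_def B_def r1_def r2_def r3_def r4_def by blast
  moreover have "e (of_int C / of_int q) = 1" if "q dvd k" "q dvd l"
  proof -
    have "q dvd M" "q dvd N"
      using that by (simp_all add: M_def N_def)
    then have "q dvd C"
      by (simp add: C_def power2_eq_square)
    then show ?thesis
      using assms(2) by (simp add: e_of_int_divide_eq_1_iff)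
  qed
  ultimately show ?thesis
    unfolding M_def[symmetric] N_def[symmetric] summand sum2_e_affine[OF assms(2)] by auto
qed

end
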